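(* In $\mathrm{HMF}(\mathbb{C}^2,\Gamma_W,W)$ the object $K_f$ is exceptional and is orthogonal to each $K_{y,j}$, $1\le j\le q-1$.
   Context: Let $p,q\ge2$ be integers and $W=x^py+y^q$. Let $L$ be the abelian group generated by $\vec x,\vec y,\vec c$ modulo $p\vec x+\vec y=q\vec y=\vec c$; $S=\mathbb{C}[x,y]$ is $L$-graded with $\deg x=\vec x$, $\deg y=\vec y$, and $R=S/(W)$; $M(l)_k=M_{k+l}$. $\mathrm{HMF}(\mathbb{C}^2,\Gamma_W,W)$ is the homotopy category of $L$-graded matrix factorisations of $W$, equivalent to $D^b(\mathrm{gr}R)/\mathrm{Perf}(\mathrm{gr}R)$, in which a finitely generated $L$-graded $R$-module is identified with its stabilisation; $\mathrm{Hom}^n(X,Y)=\mathrm{Hom}(X,Y[n])$. Let $f=x^p+y^{q-1}$, $K_f=R/(f)$, $K_y=R/(y)$, $K_{y,j}=K_y((j+1-q)\vec y)$. Exceptional means graded endomorphisms are scalars in degree $0$; orthogonal means all graded morphisms in both directions vanish. *)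

theory Defs
  imports Complex_Main "HOL-Computational_Algebra.Polynomial"
begin

text \<open>Polynomials in C[x,y] are represented as complex poly poly:
  the outer variable is y, the inner (coefficient) variable is x.
  The coefficient of x^i y^j of P is coeff (coeff P j) i.\<close>

type_synonym bpoly = "complex poly poly"

definition Xv :: bpoly where "Xv = [: monom 1 1 :]"
definition Yv :: bpoly where "Yv = monom 1 1"

definition Wpoly :: "nat \<Rightarrow> nat \<Rightarrow> bpoly" where
  "Wpoly p q = Xv ^ p * Yv + Yv ^ q"

definition fpoly :: "nat \<Rightarrow> nat \<Rightarrow> bpoly" where
  "fpoly p q = Xv ^ p + Yv ^ (q - 1)"

text \<open>The group L: elements of Z^3 = coefficients of (x,y,c), modulo the subgroup
  generated by (p,1,-1) and (0,q,-1), i.e. p x + y = c and q y = c.\<close>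

type_synonym lat = "int \<times> int \<times> int"

definition ladd :: "lat \<Rightarrow> lat \<Rightarrow> lat" where
  "ladd l m = (fst l + fst m, fst (snd l) + fst (snd m), snd (snd l) + snd (snd m))"
definition lneg :: "lat \<Rightarrow> lat" where
  "lneg l = (- fst l, - fst (snd l), - snd (snd l))"
definition lsub :: "lat \<Rightarrow> lat \<Rightarrow> lat" where
  "lsub l m = ladd l (lneg m)"
definition lsmul :: "int \<Rightarrow> lat \<Rightarrow> lat" where
  "lsmul k l = (k * fst l, k * fst (snd l), k * snd (snd l))"

definition Lx :: lat where "Lx = (1, 0, 0)"
definition Ly :: lat where "Ly = (0, 1, 0)"
definition Lc :: lat where "Lc = (0, 0, 1)"

definition Leq :: "nat \<Rightarrow> nat \<Rightarrow> lat \<Rightarrow> lat \<Rightarrow> bool" where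
  "Leq p q l m \<longleftrightarrow> (\<exists>k1 k2 :: int.
      fst l - fst m = k1 * int p \<and>
      fst (snd l) - fst (snd m) = k1 + k2 * int q \<and>
      snd (snd l) - snd (snd m) = - k1 - k2)"

definition mdeg :: "nat \<Rightarrow> nat \<Rightarrow> lat" where
  "mdeg i j = ladd (lsmul (int i) Lx) (lsmul (int j) Ly)"

definition homog :: "nat \<Rightarrow> nat \<Rightarrow> lat \<Rightarrow> bpoly \<Rightarrow> bool" where
  "homog p q l P \<longleftrightarrow> (\<forall>i j. coeff (coeff P j) i \<noteq> 0 \<longrightarrow> Leq p q (mdeg i j) l)"

text \<open>A rank-one L-graded matrix factorisation
  S(a) --u--> S(b) --v--> S(a + c),  with u of degree b - a, v of degree a + c - b, u v = W.
  The corresponding module is the cokernel of v : S(b) -> S(a+c).\<close>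

datatype mf = MF (src: lat) (tgt: lat) (phi0: bpoly) (phi1: bpoly)

definition is_mf :: "nat \<Rightarrow> nat \<Rightarrow> mf \<Rightarrow> bool" where
  "is_mf p q X \<longleftrightarrow> homog p q (lsub (tgt X) (src X)) (phi0 X)
      \<and> homog p q (lsub (ladd (src X) Lc) (tgt X)) (phi1 X)
      \<and> phi0 X * phi1 X = Wpoly p q"

definition twist :: "lat \<Rightarrow> mf \<Rightarrow> mf" where
  "twist l X = MF (ladd (src X) l) (ladd (tgt X) l) (phi0 X) (phi1 X)"

definition shift1 :: "mf \<Rightarrow> mf" where
  "shift1 X = MF (tgt X) (ladd (src X) Lc) (- phi1 X) (- phi0 X)"

definition unshift1 :: "mf \<Rightarrow> mf" where
  "unshift1 X = MF (lsub (tgt X) Lc) (src X) (- phi1 X) (- phi0 X)"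

definition shiftn :: "int \<Rightarrow> mf \<Rightarrow> mf" where
  "shiftn n X = (if n \<ge> 0 then (shift1 ^^ nat n) X else (unshift1 ^^ nat (- n)) X)"

definition is_mor :: "nat \<Rightarrow> nat \<Rightarrow> mf \<Rightarrow> mf \<Rightarrow> bpoly \<Rightarrow> bpoly \<Rightarrow> bool" where
  "is_mor p q X Y F0 F1 \<longleftrightarrow>
      homog p q (lsub (src Y) (src X)) F0 \<and> homog p q (lsub (tgt Y) (tgt X)) F1 \<and>
      phi0 Y * F0 = F1 * phi0 X \<and> phi1 Y * F1 = F0 * phi1 X"

definition nullhtp :: "nat \<Rightarrow> nat \<Rightarrow> mf \<Rightarrow> mf \<Rightarrow> bpoly \<Rightarrow> bpoly \<Rightarrow> bool" where
  "nullhtp p q X Y F0 F1 \<longleftrightarrow> (\<exists>h0 h1.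
      homog p q (lsub (lsub (tgt Y) Lc) (src X)) h0 \<and>
      homog p q (lsub (src Y) (tgt X)) h1 \<and>
      F0 = h1 * phi0 X + phi1 Y * h0 \<and>
      F1 = phi0 Y * h1 + h0 * phi1 X)"

definition hom_vanish :: "nat \<Rightarrow> nat \<Rightarrow> int \<Rightarrow> mf \<Rightarrow> mf \<Rightarrow> bool" where
  "hom_vanish p q n X Y \<longleftrightarrow>
     (\<forall>F0 F1. is_mor p q X (shiftn n Y) F0 F1 \<longrightarrow> nullhtp p q X (shiftn n Y) F0 F1)"

definition exceptional :: "nat \<Rightarrow> nat \<Rightarrow> mf \<Rightarrow> bool" where
  "exceptional p q X \<longleftrightarrow>
     (\<forall>n. n \<noteq> 0 \<longrightarrow> hom_vanish p q n X X) \<and>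
     (\<forall>F0 F1. is_mor p q X X F0 F1 \<longrightarrow>
        (\<exists>a::complex. nullhtp p q X X (F0 - [:[:a:]:]) (F1 - [:[:a:]:]))) \<and>
     \<not> nullhtp p q X X 1 1"

definition orthogonal :: "nat \<Rightarrow> nat \<Rightarrow> mf \<Rightarrow> mf \<Rightarrow> bool" where
  "orthogonal p q X Y \<longleftrightarrow> (\<forall>n. hom_vanish p q n X Y \<and> hom_vanish p q n Y X)"

text \<open>K_f = R/(f): cokernel of S(-c+y) --f--> S, with u = y.
      K_y = R/(y): cokernel of S(-y) --y--> S, with u = f.\<close>
definition Kf :: "nat \<Rightarrow> nat \<Rightarrow> mf" where
  "Kf p q = MF (lneg Lc) (ladd (lneg Lc) Ly) Yv (fpoly p q)"

definition Ky :: "nat \<Rightarrow> nat \<Rightarrow> mf" where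
  "Ky p q = MF (lneg Lc) (lneg Ly) (fpoly p q) Yv"

definition Kyj :: "nat \<Rightarrow> nat \<Rightarrow> nat \<Rightarrow> mf" where
  "Kyj p q j = twist (lsmul (int j + 1 - int q) Ly) (Ky p q)"

end

theory Submission
  imports Defs
begin

text \<open>All objects involved are rank-one factorisations built from the two factors of
  \<open>W = y f\<close>, so a morphism is a pair of homogeneous polynomials. If source and target carry
  different factors in the same slot, the relation \<open>f F = G y\<close> makes \<open>F\<close> divisible by \<open>y\<close>
  (modulo \<open>y\<close>, \<open>f = x^p\<close> is a non-zero-divisor), and the quotient is already a null-homotopy.
  If they carry the same factors up to sign, the morphism is null-homotopic as soon as its
  component lies in the ideal \<open>(y, f)\<close>, and it does unless its \<open>y\<close>-free part contains a
  monomial \<open>x^i\<close> with \<open>i < p\<close>. The \<open>L\<close>-degree of such an \<open>x^i\<close> is incompatible with every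
  nonzero shift of \<open>K_f\<close> and with every twist by \<open>1 \<le> j \<le> q - 1\<close> (it would force \<open>q\<close> to
  divide \<open>j\<close>); for the zero shift only scalars survive, since \<open>L\<close>-degree \<open>0\<close> contains no
  nonconstant monomial.\<close>

lemma Xv_power: "Xv ^ n = [:monom 1 n:]"
  by (induction n) (simp_all add: Xv_def mult_monom)

lemma Yv_power: "Yv ^ n = monom 1 n"
  by (simp add: Yv_def monom_power)

lemma Yv_nonzero: "Yv \<noteq> 0"
  by (simp add: Yv_def)

lemma coeff_fpoly_0: "q \<ge> 2 \<Longrightarrow> coeff (fpoly p q) 0 = monom 1 p"
  by (simp add: fpoly_def Xv_power Yv_power)

lemma fpoly_nonzero: "q \<ge> 2 \<Longrightarrow> fpoly p q \<noteq> 0"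
proof
  assume "q \<ge> 2" "fpoly p q = 0"
  then show False
    using coeff_fpoly_0[of q p] by simp
qed

lemma Yv_mult_poly_shift: "coeff P 0 = 0 \<Longrightarrow> P = Yv * poly_shift 1 P"
  by (rule poly_eqI) (auto simp: Yv_def coeff_monom_mult coeff_poly_shift)

lemma Yv_dvd_of_fpoly_mult:
  assumes "q \<ge> 2" and "fpoly p q * G = H * Yv"
  shows "G = Yv * poly_shift 1 G"
proof (rule Yv_mult_poly_shift)
  have "coeff (fpoly p q * G) 0 = coeff (H * Yv) 0"
    using assms(2) by simp
  then have "monom 1 p * coeff G 0 = 0"
    by (simp add: coeff_mult_0 coeff_fpoly_0[OF assms(1)] Yv_def)
  then show "coeff G 0 = 0"
    by simp
qed

section \<open>The grading group\<close>

lemmas lat_defs = ladd_def lsub_def lneg_def lsmul_def Lx_def Ly_def Lc_def mdeg_def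

lemma Leq_of_eq: "l = m \<Longrightarrow> Leq p q l m"
  unfolding Leq_def by (rule exI[of _ 0], rule exI[of _ 0]) simp

lemma Leq_trans:
  assumes "Leq p q l m" and "Leq p q m n"
  shows "Leq p q l n"
proof -
  obtain k1 k2 where "fst l - fst m = k1 * int p" "fst (snd l) - fst (snd m) = k1 + k2 * int q"
    "snd (snd l) - snd (snd m) = - k1 - k2"
    using assms(1) unfolding Leq_def by blast
  moreover obtain k1' k2' where "fst m - fst n = k1' * int p"
    "fst (snd m) - fst (snd n) = k1' + k2' * int q" "snd (snd m) - snd (snd n) = - k1' - k2'"
    using assms(2) unfolding Leq_def by blast
  ultimately show ?thesis
    unfolding Leq_def
    by (intro exI[of _ "k1 + k1'"] exI[of _ "k2 + k2'"]) (simp add: algebra_simps)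
qed

lemma Leq_mdeg_Suc: "Leq p q (mdeg i (Suc j)) d \<Longrightarrow> Leq p q (mdeg i j) (lsub d Ly)"
  unfolding Leq_def by (elim exE, rule_tac x = k1 in exI, rule_tac x = k2 in exI) (simp add: lat_defs)

lemma Leq_mdeg_add_p:
  "Leq p q (mdeg (i + p) 0) d \<Longrightarrow> Leq p q (mdeg i 0) (ladd (lsub d Lc) Ly)"
  unfolding Leq_def
  by (elim exE, rule_tac x = "k1 - 1" in exI, rule_tac x = k2 in exI)
    (simp add: lat_defs algebra_simps)

lemma Leq_mdeg_add_p_Ly:
  assumes "q \<ge> 2" and "Leq p q (mdeg (i + p) 0) d"
  shows "Leq p q (mdeg i (q - 2)) (lsub d Ly)"
proof -
  have "int (q - 2) = int q - 2"
    using assms(1) by simp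
  with assms(2) show ?thesis
    unfolding Leq_def
    by (elim exE, rule_tac x = "k1 - 1" in exI, rule_tac x = "k2 + 1" in exI)
      (simp add: lat_defs algebra_simps)
qed

lemma Leq_mdeg_zero:
  assumes "p > 0" and "q \<ge> 2" and "Leq p q (mdeg i j) (0, 0, 0)"
  shows "i = 0 \<and> j = 0"
proof -
  obtain k where i: "int i = k * int p" and j: "int j = k - k * int q"
    using assms(3) unfolding Leq_def by (auto simp: lat_defs)
  have "k \<ge> 0"
    using i assms(1) by (metis of_nat_0_le_iff of_nat_0_less_iff zero_le_mult_iff not_le)
  moreover have "k * 2 \<le> k * int q"
    using \<open>k \<ge> 0\<close> assms(2) by (intro mult_left_mono) auto
  ultimately have "k = 0"
    using j by linarith
  with i j show ?thesis
    by simp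
qed

lemma not_Leq_mdeg_low:
  assumes "i < p" and "fst d = 0" and "fst (snd d) + int q * snd (snd d) \<noteq> 0"
  shows "\<not> Leq p q (mdeg i 0) d"
proof
  assume "Leq p q (mdeg i 0) d"
  then obtain k1 k2 where i: "int i = k1 * int p"
    and "- fst (snd d) = k1 + k2 * int q" "snd (snd d) = k1 + k2"
    using assms(2) unfolding Leq_def by (force simp: lat_defs)
  moreover have "k1 = 0"
    using i assms(1)
    by (smt (verit, ccfv_SIG) mult_less_cancel_right2 mult_neg_pos of_nat_less_0_iff of_nat_less_iff)
  ultimately show False
    using assms(3) by (simp add: algebra_simps)
qed

section \<open>Homogeneous polynomials\<close>

lemma homog_0: "homog p q l 0"
  by (simp add: homog_def)

lemma homog_uminus: "homog p q l P \<Longrightarrow> homog p q l (- P)"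
  by (simp add: homog_def)

lemma homog_Leq: "homog p q d P \<Longrightarrow> Leq p q d d' \<Longrightarrow> homog p q d' P"
  unfolding homog_def using Leq_trans by blast

lemma homog_Yv_mult: "homog p q d (Yv * G) \<Longrightarrow> homog p q (lsub d Ly) G"
  unfolding homog_def
proof (intro allI impI)
  fix i j
  assume "\<forall>i j. coeff (coeff (Yv * G) j) i \<noteq> 0 \<longrightarrow> Leq p q (mdeg i j) d"
    and "coeff (coeff G j) i \<noteq> 0"
  then have "Leq p q (mdeg i (Suc j)) d"
    by (simp add: Yv_def coeff_monom_mult)
  then show "Leq p q (mdeg i j) (lsub d Ly)"
    by (rule Leq_mdeg_Suc)
qed

lemma homog_degree_zero:
  assumes "p > 0" and "q \<ge> 2" and "homog p q (0, 0, 0) F"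
  shows "F = [:[:coeff (coeff F 0) 0:]:]"
proof (intro poly_eqI)
  fix i j
  show "coeff (coeff F j) i = coeff (coeff [:[:coeff (coeff F 0) 0:]:] j) i"
  proof (cases "coeff (coeff F j) i = 0")
    case False
    then have "i = 0 \<and> j = 0"
      using assms Leq_mdeg_zero unfolding homog_def by blast
    then show ?thesis
      by simp
  qed (auto simp: coeff_pCons split: nat.splits)
qed

text \<open>Modulo \<open>y\<close> we have \<open>f = x^p\<close>, so a polynomial whose \<open>y\<close>-free part \<open>x^p r\<close> is
  divisible by \<open>x^p\<close> lies in the ideal \<open>(y, f)\<close>; the correction term comes from
  \<open>y^(q-1) = f - x^p\<close>.\<close>

lemma fpoly_Yv_decomposition:
  assumes "q \<ge> 2" and "\<forall>k<p. coeff (coeff g 0) k = 0"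
  defines "r \<equiv> poly_shift p (coeff g 0)"
  shows "g = (poly_shift 1 g - monom r (q - 2)) * Yv + fpoly p q * [:r:]"
proof -
  have g0: "coeff g 0 = monom 1 p * r"
    by (rule poly_eqI) (auto simp: coeff_monom_mult r_def coeff_poly_shift assms(2))
  have g: "g = [:coeff g 0:] + Yv * poly_shift 1 g"
    by (rule poly_eqI) (auto simp: Yv_def coeff_monom_mult coeff_poly_shift coeff_pCons
        split: nat.split)
  have "monom r (q - 2) * Yv = monom r (q - 1)"
    using assms(1) by (simp add: Yv_def mult_monom Suc_diff_Suc numeral_2_eq_2)
  moreover have "Yv ^ (q - 1) * [:r:] = monom r (q - 1)"
    by (simp add: Yv_power monom_0[symmetric] mult_monom del: monom_0)
  moreover have "Xv ^ p * [:r:] = [:coeff g 0:]"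
    by (simp add: Xv_power g0)
  ultimately show ?thesis
    by (subst g) (simp add: fpoly_def algebra_simps)
qed

lemma homog_decomposition:
  assumes "q \<ge> 2" and g: "homog p q d g" and low: "\<forall>i<p. \<not> Leq p q (mdeg i 0) d"
  shows "\<exists>A B. homog p q (lsub d Ly) A \<and> homog p q (ladd (lsub d Lc) Ly) B \<and>
    g = A * Yv + fpoly p q * B"
proof (intro exI conjI)
  define r where "r = poly_shift p (coeff g 0)"
  have "\<forall>k<p. coeff (coeff g 0) k = 0"
    using g low unfolding homog_def by blast
  then show "g = (poly_shift 1 g - monom r (q - 2)) * Yv + fpoly p q * [:r:]"
    unfolding r_def by (rule fpoly_Yv_decomposition[OF assms(1)])
  have r: "Leq p q (mdeg (i + p) 0) d" if "coeff r i \<noteq> 0" for i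
    using that g unfolding homog_def r_def by (simp add: coeff_poly_shift)
  show "homog p q (ladd (lsub d Lc) Ly) [:r:]"
    unfolding homog_def using r Leq_mdeg_add_p by (auto simp: coeff_pCons split: nat.splits)
  show "homog p q (lsub d Ly) (poly_shift 1 g - monom r (q - 2))"
    unfolding homog_def
  proof (intro allI impI)
    fix i j
    assume "coeff (coeff (poly_shift 1 g - monom r (q - 2)) j) i \<noteq> 0"
    then consider "coeff (coeff g (Suc j)) i \<noteq> 0" | "j = q - 2" "coeff r i \<noteq> 0"
      by (cases "coeff r i = 0") (auto simp: coeff_poly_shift split: if_splits)
    then show "Leq p q (mdeg i j) (lsub d Ly)"
    proof cases
      case 1
      then show ?thesis
        using g Leq_mdeg_Suc unfolding homog_def by blast
    next
      case 2
      then show ?thesis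
        using r Leq_mdeg_add_p_Ly assms(1) by blast
    qed
  qed
qed

section \<open>Shifts\<close>

lemma int_parity_cases:
  fixes n :: int
  obtains k where "n = 2 * k" | k where "n = 2 * k + 1"
  by (metis evenE oddE)

text \<open>Since \<open>[2] = (c)\<close>, the shift \<open>X[n]\<close> has the closed form below.\<close>

definition shift_explicit :: "int \<Rightarrow> mf \<Rightarrow> mf" where
  "shift_explicit n X = (if even n
     then MF (ladd (src X) (lsmul (n div 2) Lc)) (ladd (tgt X) (lsmul (n div 2) Lc)) (phi0 X) (phi1 X)
     else MF (ladd (tgt X) (lsmul (n div 2) Lc)) (ladd (src X) (lsmul (n div 2 + 1) Lc))
       (- phi1 X) (- phi0 X))"

lemma shift_explicit_even:
  "shift_explicit (2 * k) X =
    MF (ladd (src X) (lsmul k Lc)) (ladd (tgt X) (lsmul k Lc)) (phi0 X) (phi1 X)"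
  by (simp add: shift_explicit_def)

lemma shift_explicit_odd:
  "shift_explicit (2 * k + 1) X =
    MF (ladd (tgt X) (lsmul k Lc)) (ladd (src X) (lsmul (k + 1) Lc)) (- phi1 X) (- phi0 X)"
  by (simp add: shift_explicit_def)

lemma shift1_shift_explicit: "shift1 (shift_explicit n X) = shift_explicit (n + 1) X"
proof (cases n rule: int_parity_cases)
  case (1 k)
  then show ?thesis
    by (simp only: shift_explicit_even shift_explicit_odd)
      (simp add: shift1_def lat_defs algebra_simps)
next
  case (2 k)
  then have "n + 1 = 2 * (k + 1)"
    by simp
  with 2 show ?thesis
    by (simp only: shift_explicit_even shift_explicit_odd)
      (simp add: shift1_def lat_defs algebra_simps)
qed

lemma unshift1_shift_explicit: "unshift1 (shift_explicit n X) = shift_explicit (n - 1) X"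
proof (cases n rule: int_parity_cases)
  case (1 k)
  then have "n - 1 = 2 * (k - 1) + 1"
    by simp
  with 1 show ?thesis
    by (simp only: shift_explicit_even shift_explicit_odd)
      (simp add: unshift1_def lat_defs algebra_simps)
next
  case (2 k)
  then have "n - 1 = 2 * k"
    by simp
  with 2 show ?thesis
    by (simp only: shift_explicit_even shift_explicit_odd)
      (simp add: unshift1_def lat_defs algebra_simps)
qed

lemma shiftn_eq_shift_explicit: "shiftn n X = shift_explicit n X"
proof -
  have shift_explicit_0: "shift_explicit 0 X = X"
    by (cases X) (simp add: shift_explicit_def lat_defs)
  have "(shift1 ^^ m) X = shift_explicit (int m) X" for m
    by (induction m) (simp_all add: shift_explicit_0 shift1_shift_explicit add.commute)
  moreover have "(unshift1 ^^ m) X = shift_explicit (- int m) X" for m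
  proof (induction m)
    case (Suc m)
    have "- int (Suc m) = - int m - 1"
      by simp
    then show ?case
      by (simp only: funpow.simps o_apply Suc.IH unshift1_shift_explicit)
  qed (simp add: shift_explicit_0)
  ultimately show ?thesis
    by (simp add: shiftn_def)
qed

lemmas shiftn_even = shiftn_eq_shift_explicit[where n = "2 * k" for k, unfolded shift_explicit_even]
lemmas shiftn_odd = shiftn_eq_shift_explicit[where n = "2 * k + 1" for k, unfolded shift_explicit_odd]

section \<open>Null-homotopy criteria for rank-one factorisations\<close>

lemma nullhtp_same_factors:
  assumes mor: "is_mor p q (MF a1 b1 u v) (MF a2 b2 (E * u) (E * v)) F0 F1"
    and E: "E = 1 \<or> E = -1" and "u \<noteq> 0" and F0: "F0 = A * u + v * B"
    and "homog p q (lsub a2 b1) A" and B: "homog p q (lsub (lsub b2 Lc) a1) B"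
  shows "nullhtp p q (MF a1 b1 u v) (MF a2 b2 (E * u) (E * v)) F0 F1"
  unfolding nullhtp_def mf.sel
proof (intro exI conjI)
  have "u * (E * F0) = u * F1"
    using mor by (simp add: is_mor_def algebra_simps)
  then have "F1 = E * F0"
    using \<open>u \<noteq> 0\<close> by simp
  then show "F1 = E * u * A + E * B * v"
    using F0 by (simp add: algebra_simps)
  show "F0 = A * u + E * v * (E * B)"
    using E F0 by auto
  show "homog p q (lsub (lsub b2 Lc) a1) (E * B)"
    using E B homog_uminus by (metis mult_1 mult_minus1)
qed fact

lemma nullhtp_Yv_fpoly_same:
  assumes "q \<ge> 2" and "E = 1 \<or> E = -1"
    and mor: "is_mor p q (MF a1 b1 Yv (fpoly p q)) (MF a2 b2 (E * Yv) (E * fpoly p q)) F0 F1"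
    and "\<forall>i<p. \<not> Leq p q (mdeg i 0) (lsub a2 a1)"
    and "Leq p q (lsub (lsub a2 a1) Ly) (lsub a2 b1)"
    and "Leq p q (ladd (lsub (lsub a2 a1) Lc) Ly) (lsub (lsub b2 Lc) a1)"
  shows "nullhtp p q (MF a1 b1 Yv (fpoly p q)) (MF a2 b2 (E * Yv) (E * fpoly p q)) F0 F1"
proof -
  have "homog p q (lsub a2 a1) F0"
    using mor by (simp add: is_mor_def)
  then obtain A B where "homog p q (lsub (lsub a2 a1) Ly) A"
    "homog p q (ladd (lsub (lsub a2 a1) Lc) Ly) B" "F0 = A * Yv + fpoly p q * B"
    using homog_decomposition assms(1,4) by blast
  then show ?thesis
    using assms Yv_nonzero by (intro nullhtp_same_factors) (auto elim: homog_Leq)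
qed

lemma nullhtp_fpoly_Yv_same:
  assumes "q \<ge> 2" and "E = 1 \<or> E = -1"
    and mor: "is_mor p q (MF a1 b1 (fpoly p q) Yv) (MF a2 b2 (E * fpoly p q) (E * Yv)) F0 F1"
    and "\<forall>i<p. \<not> Leq p q (mdeg i 0) (lsub a2 a1)"
    and "Leq p q (ladd (lsub (lsub a2 a1) Lc) Ly) (lsub a2 b1)"
    and "Leq p q (lsub (lsub a2 a1) Ly) (lsub (lsub b2 Lc) a1)"
  shows "nullhtp p q (MF a1 b1 (fpoly p q) Yv) (MF a2 b2 (E * fpoly p q) (E * Yv)) F0 F1"
proof -
  have "homog p q (lsub a2 a1) F0"
    using mor by (simp add: is_mor_def)
  then obtain A B where "homog p q (lsub (lsub a2 a1) Ly) A"
    "homog p q (ladd (lsub (lsub a2 a1) Lc) Ly) B" "F0 = B * fpoly p q + Yv * A"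
    using homog_decomposition assms(1,4) by (metis add.commute mult.commute)
  then show ?thesis
    using assms fpoly_nonzero by (intro nullhtp_same_factors) (auto elim: homog_Leq)
qed

lemma nullhtp_Yv_fpoly_swapped:
  assumes "q \<ge> 2" and E: "E = 1 \<or> E = -1"
    and mor: "is_mor p q (MF a1 b1 Yv (fpoly p q)) (MF a2 b2 (E * fpoly p q) (E * Yv)) F0 F1"
    and "Leq p q (lsub (lsub a2 a1) Ly) (lsub a2 b1)"
  shows "nullhtp p q (MF a1 b1 Yv (fpoly p q)) (MF a2 b2 (E * fpoly p q) (E * Yv)) F0 F1"
  unfolding nullhtp_def mf.sel
proof (intro exI conjI)
  have eq: "E * fpoly p q * F0 = F1 * Yv" and F0: "homog p q (lsub a2 a1) F0"
    using mor by (auto simp: is_mor_def)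
  have "fpoly p q * F0 = E * (E * fpoly p q * F0)"
    using E by auto
  with eq have "fpoly p q * F0 = (E * F1) * Yv"
    by (simp add: ac_simps)
  then have F0_eq: "F0 = Yv * poly_shift 1 F0"
    by (rule Yv_dvd_of_fpoly_mult[OF assms(1)])
  show "F0 = poly_shift 1 F0 * Yv + E * Yv * 0"
    using F0_eq by (simp add: mult.commute)
  have "F1 * Yv = E * fpoly p q * (Yv * poly_shift 1 F0)"
    using eq F0_eq by metis
  also have "\<dots> = (E * fpoly p q * poly_shift 1 F0) * Yv"
    by (simp add: ac_simps)
  finally have "F1 * Yv = (E * fpoly p q * poly_shift 1 F0) * Yv" .
  then show "F1 = E * fpoly p q * poly_shift 1 F0 + 0 * fpoly p q"
    using Yv_nonzero by simp
  have "homog p q (lsub a2 a1) (Yv * poly_shift 1 F0)"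
    using F0 F0_eq by simp
  then show "homog p q (lsub a2 b1) (poly_shift 1 F0)"
    using homog_Leq homog_Yv_mult assms(4) by blast
qed (rule homog_0)

lemma nullhtp_fpoly_Yv_swapped:
  assumes "q \<ge> 2"
    and mor: "is_mor p q (MF a1 b1 (fpoly p q) Yv) (MF a2 b2 Yv (fpoly p q)) F0 F1"
    and "Leq p q (lsub (lsub b2 b1) Ly) (lsub (lsub b2 Lc) a1)"
  shows "nullhtp p q (MF a1 b1 (fpoly p q) Yv) (MF a2 b2 Yv (fpoly p q)) F0 F1"
  unfolding nullhtp_def mf.sel
proof (intro exI conjI)
  have eq0: "Yv * F0 = F1 * fpoly p q" and eq1: "fpoly p q * F1 = F0 * Yv"
    and F1: "homog p q (lsub b2 b1) F1"
    using mor by (auto simp: is_mor_def)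
  from assms(1) eq1 have F1_eq: "F1 = Yv * poly_shift 1 F1"
    by (rule Yv_dvd_of_fpoly_mult)
  show "F1 = Yv * 0 + poly_shift 1 F1 * Yv"
    using F1_eq by (simp add: mult.commute)
  have "Yv * F0 = (Yv * poly_shift 1 F1) * fpoly p q"
    using eq0 F1_eq by metis
  also have "\<dots> = Yv * (fpoly p q * poly_shift 1 F1)"
    by (simp add: ac_simps)
  finally have "Yv * F0 = Yv * (fpoly p q * poly_shift 1 F1)" .
  then show "F0 = 0 * fpoly p q + fpoly p q * poly_shift 1 F1"
    using Yv_nonzero by simp
  have "homog p q (lsub b2 b1) (Yv * poly_shift 1 F1)"
    using F1 F1_eq by simp
  then show "homog p q (lsub (lsub b2 Lc) a1) (poly_shift 1 F1)"
    using homog_Leq homog_Yv_mult assms(3) by blast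
qed (rule homog_0)

lemma hom_vanish_Kf_Kf_even:
  assumes "q \<ge> 2" and "k \<noteq> 0"
  shows "hom_vanish p q (2 * k) (Kf p q) (Kf p q)"
  unfolding hom_vanish_def shiftn_even Kf_def mf.sel
  using assms
  by (intro allI impI nullhtp_Yv_fpoly_same[where E = 1, simplified] not_Leq_mdeg_low Leq_of_eq)
    (simp_all add: lat_defs)

lemma hom_vanish_Kf_Kf_odd:
  assumes "q \<ge> 2"
  shows "hom_vanish p q (2 * k + 1) (Kf p q) (Kf p q)"
  unfolding hom_vanish_def shiftn_odd Kf_def mf.sel
  using assms
  by (intro allI impI nullhtp_Yv_fpoly_swapped[where E = "-1", simplified] Leq_of_eq)
    (simp_all add: lat_defs)

lemma hom_vanish_Kf_Kyj_even:
  assumes "q \<ge> 2"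
  shows "hom_vanish p q (2 * k) (Kf p q) (Kyj p q j)"
  unfolding hom_vanish_def shiftn_even Kf_def Kyj_def Ky_def twist_def mf.sel
  using assms
  by (intro allI impI nullhtp_Yv_fpoly_swapped[where E = 1, simplified] Leq_of_eq)
    (simp_all add: lat_defs)

lemma hom_vanish_Kyj_Kf_even:
  assumes "q \<ge> 2"
  shows "hom_vanish p q (2 * k) (Kyj p q j) (Kf p q)"
  unfolding hom_vanish_def shiftn_even Kf_def Kyj_def Ky_def twist_def mf.sel
  using assms
  by (intro allI impI nullhtp_fpoly_Yv_swapped Leq_of_eq) (simp_all add: lat_defs)

lemma int_ne_multiple: "0 < j \<Longrightarrow> j < q \<Longrightarrow> int j \<noteq> int q * m"
  using zdvd_imp_le[of "int q" "int j"] by (auto simp: dvd_def)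

lemma hom_vanish_Kf_Kyj_odd:
  assumes "q \<ge> 2" and "1 \<le> j" and "j \<le> q - 1"
  shows "hom_vanish p q (2 * k + 1) (Kf p q) (Kyj p q j)"
proof -
  have "int j \<noteq> int q * (- k)"
    using assms by (intro int_ne_multiple) auto
  then show ?thesis
    unfolding hom_vanish_def shiftn_odd Kf_def Kyj_def Ky_def twist_def mf.sel
    using assms
    by (intro allI impI nullhtp_Yv_fpoly_same[where E = "-1", simplified] not_Leq_mdeg_low Leq_of_eq)
      (simp_all add: lat_defs algebra_simps)
qed

lemma hom_vanish_Kyj_Kf_odd:
  assumes "q \<ge> 2" and "1 \<le> j" and "j \<le> q - 1"
  shows "hom_vanish p q (2 * k + 1) (Kyj p q j) (Kf p q)"
proof -
  have "int j \<noteq> int q * (k + 1)"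
    using assms by (intro int_ne_multiple) auto
  then show ?thesis
    unfolding hom_vanish_def shiftn_odd Kf_def Kyj_def Ky_def twist_def mf.sel
    using assms
    by (intro allI impI nullhtp_fpoly_Yv_same[where E = "-1", simplified] not_Leq_mdeg_low Leq_of_eq)
      (simp_all add: lat_defs algebra_simps)
qed

lemma Kf_endomorphism_scalar:
  assumes "p \<ge> 2" and "q \<ge> 2" and mor: "is_mor p q (Kf p q) (Kf p q) F0 F1"
  shows "\<exists>a. nullhtp p q (Kf p q) (Kf p q) (F0 - [:[:a:]:]) (F1 - [:[:a:]:])"
proof
  have "Yv * F0 = Yv * F1" and F0: "homog p q (0, 0, 0) F0"
    using mor by (simp_all add: is_mor_def Kf_def lat_defs mult.commute)
  then have "F1 = F0"
    using Yv_nonzero by simp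
  moreover have "F0 = [:[:coeff (coeff F0 0) 0:]:]"
    using homog_degree_zero[OF _ assms(2) F0] assms(1) by simp
  ultimately show "nullhtp p q (Kf p q) (Kf p q)
      (F0 - [:[:coeff (coeff F0 0) 0:]:]) (F1 - [:[:coeff (coeff F0 0) 0:]:])"
    unfolding nullhtp_def by (intro exI[of _ 0]) (simp add: homog_0)
qed

lemma Kf_id_not_nullhtp:
  assumes "p \<ge> 2" and "q \<ge> 2"
  shows "\<not> nullhtp p q (Kf p q) (Kf p q) 1 1"
proof
  assume "nullhtp p q (Kf p q) (Kf p q) 1 1"
  then obtain h0 h1 where "1 = h1 * Yv + fpoly p q * h0"
    unfolding nullhtp_def Kf_def by auto
  then have "1 = coeff (coeff (h1 * Yv + fpoly p q * h0) 0) 0"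
    by (metis coeff_1 one_poly_eq_simps(1) pCons_0_0 coeff_pCons_0)
  also have "\<dots> = coeff (monom 1 p * coeff h0 0) 0"
    by (simp add: coeff_mult_0 coeff_fpoly_0[OF assms(2)] Yv_def)
  also have "\<dots> = 0"
    using assms(1) by (simp add: coeff_monom_mult)
  finally show False
    by simp
qed

theorem lemma4p3:
  fixes p q :: nat
  assumes "p \<ge> 2" and "q \<ge> 2"
  shows "exceptional p q (Kf p q) \<and>
         (\<forall>j. 1 \<le> j \<and> j \<le> q - 1 \<longrightarrow> orthogonal p q (Kf p q) (Kyj p q j))"
proof
  have "hom_vanish p q n (Kf p q) (Kf p q)" if "n \<noteq> 0" for n
    using that hom_vanish_Kf_Kf_even hom_vanish_Kf_Kf_odd assms(2)
    by (cases n rule: int_parity_cases) auto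
  then show "exceptional p q (Kf p q)"
    unfolding exceptional_def using Kf_endomorphism_scalar Kf_id_not_nullhtp assms by blast
  have "hom_vanish p q n (Kf p q) (Kyj p q j) \<and> hom_vanish p q n (Kyj p q j) (Kf p q)"
    if "1 \<le> j" "j \<le> q - 1" for j n
    using that assms(2) hom_vanish_Kf_Kyj_even hom_vanish_Kyj_Kf_even
      hom_vanish_Kf_Kyj_odd hom_vanish_Kyj_Kf_odd
    by (cases n rule: int_parity_cases) auto
  then show "\<forall>j. 1 \<le> j \<and> j \<le> q - 1 \<longrightarrow> orthogonal p q (Kf p q) (Kyj p q j)"
    unfolding orthogonal_def by blast
qed

end
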